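(* Let $(G,H,\mathcal{L})$ be a cut-and-project scheme and let $a\in G$. Then there exist a cut-and-project scheme $(G,H',\mathcal{L}')$ and some $b\in H'$ such that: (a) $H$ is (identified with) an open and closed subgroup of $H'$; (b) $(a,b)\in\mathcal{L}'$; (c) $\mathcal{L}'\cap(G\times H)=\mathcal{L}$; (d) for each $W\subseteq H$ we have $\Lambda_W=\pi^G(\mathcal{L}'\cap(G\times W))$ and $a+\Lambda_W=\pi^G(\mathcal{L}'\cap(G\times(b+W)))$; (e) for each $W\subseteq H$, both $W\subseteq H'$ and $b+W\subseteq H'$ have each of the properties precompactness, non-empty interior, topological regularity and measure-theoretic regularity (with respect to $H'$) which $W$ has as a subset of $H$; (f) if $H$ is metrisable, then $H'$ is metrisable.
   Context: A cut-and-project scheme $(G,H,\mathcal{L})$ consists of locally compact abelian groups $G,H$ and a discrete cocompact subgroup (lattice) $\mathcal{L}\subseteq G\times H$ such that the coordinate projection $\pi^G$ restricted to $\mathcal{L}$ is injective and $\pi^H(\mathcal{L})$ is dense in $H$. For $W\subseteq H$ the projection set is $\Lambda_W=\pi^G(\mathcal{L}\cap(G\times W))$. For a set $W\subseteq H$: precompact means $\overline{W}$ is compact; topologically regular means $\overline{W}=\overline{W^\circ}$; measure-theoretically regular means the boundary $\partial W=\overline W\setminus W^\circ$ has Haar measure zero. *)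

theory Defs
  imports "HOL-Analysis.Analysis" "HOL-Algebra.Algebra"
begin

text \<open>Abelian groups are HOL-Algebra commutative groups (written multiplicatively,
  so the group operation is \<open>\<otimes>\<close>), equipped with an abstract topology whose
  underlying set is the carrier.\<close>

definition lca_group :: "('a, 'm) monoid_scheme \<Rightarrow> 'a topology \<Rightarrow> bool" where
  "lca_group Gr T \<longleftrightarrow>
     comm_group Gr \<and> topspace T = carrier Gr \<and>
     continuous_map (prod_topology T T) T (\<lambda>(x, y). x \<otimes>\<^bsub>Gr\<^esub> y) \<and>
     continuous_map T T (\<lambda>x. inv\<^bsub>Gr\<^esub> x) \<and>
     Hausdorff_space T \<and> locally_compact_space T"

definition is_lattice :: "('a, 'm) monoid_scheme \<Rightarrow> 'a topology \<Rightarrow> 'a set \<Rightarrow> bool" where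
  "is_lattice Gr T L \<longleftrightarrow>
     subgroup L Gr \<and>
     (\<forall>x\<in>L. \<exists>U. openin T U \<and> U \<inter> L = {x}) \<and>
     (\<exists>Q :: 'a set topology. quotient_map T Q (\<lambda>x. L #>\<^bsub>Gr\<^esub> x) \<and> compact_space Q)"

definition cut_and_project ::
  "'g monoid \<Rightarrow> 'g topology \<Rightarrow> 'h monoid \<Rightarrow> 'h topology \<Rightarrow> ('g \<times> 'h) set \<Rightarrow> bool" where
  "cut_and_project G TG H TH L \<longleftrightarrow>
     lca_group G TG \<and> lca_group H TH \<and>
     is_lattice (G \<times>\<times> H) (prod_topology TG TH) L \<and>
     inj_on fst L \<and>
     TH closure_of (snd ` L) = carrier H"

definition proj_set :: "('g \<times> 'h) set \<Rightarrow> 'h set \<Rightarrow> 'g set" where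
  "proj_set L W = fst ` {p \<in> L. snd p \<in> W}"

definition haar_measure :: "('a, 'm) monoid_scheme \<Rightarrow> 'a topology \<Rightarrow> 'a measure \<Rightarrow> bool" where
  "haar_measure Gr T \<mu> \<longleftrightarrow>
     space \<mu> = topspace T \<and> sets \<mu> = sigma_sets (topspace T) {U. openin T U} \<and>
     emeasure \<mu> (topspace T) \<noteq> 0 \<and>
     (\<forall>x\<in>carrier Gr. \<forall>A\<in>sets \<mu>. emeasure \<mu> ((\<lambda>y. x \<otimes>\<^bsub>Gr\<^esub> y) ` A) = emeasure \<mu> A) \<and>
     (\<forall>K. compactin T K \<longrightarrow> emeasure \<mu> K < \<infinity>) \<and>
     (\<forall>A\<in>sets \<mu>. emeasure \<mu> A = (INF U\<in>{U. openin T U \<and> A \<subseteq> U}. emeasure \<mu> U)) \<and>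
     (\<forall>U. openin T U \<longrightarrow> emeasure \<mu> U = (SUP K\<in>{K. compactin T K \<and> K \<subseteq> U}. emeasure \<mu> K))"

definition precompact_in :: "'a topology \<Rightarrow> 'a set \<Rightarrow> bool" where
  "precompact_in T W \<longleftrightarrow> compactin T (T closure_of W)"

definition nonempty_interior :: "'a topology \<Rightarrow> 'a set \<Rightarrow> bool" where
  "nonempty_interior T W \<longleftrightarrow> T interior_of W \<noteq> {}"

definition top_regular :: "'a topology \<Rightarrow> 'a set \<Rightarrow> bool" where
  "top_regular T W \<longleftrightarrow> T closure_of W = T closure_of (T interior_of W)"

text \<open>Boundary is a Haar null set (for every, equivalently some, Haar measure).\<close>
definition mt_regular :: "('a, 'm) monoid_scheme \<Rightarrow> 'a topology \<Rightarrow> 'a set \<Rightarrow> bool" where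
  "mt_regular Gr T W \<longleftrightarrow>
     (\<forall>\<mu>. haar_measure Gr T \<mu> \<longrightarrow> emeasure \<mu> (T closure_of W - T interior_of W) = 0)"

end

theory Submission
  imports Defs "HOL-Computational_Algebra.Group_Closure"
begin

text \<open>The integers \<open>n\<close> with \<open>a\<^sup>n \<in> \<pi>\<^sup>G(L)\<close> form a subgroup \<open>k\<int>\<close>, \<open>k \<ge> 0\<close>; choose
  \<open>(a\<^sup>k, c) \<in> L\<close>. Adjoin to \<open>H\<close> a discrete element \<open>t\<close> with \<open>t\<^sup>k = c\<close>, i.e. let
  \<open>H' = (H \<times> \<int>)/\<langle>(c, -k)\<rangle>\<close> with the topology of \<open>H \<times> \<int>/k\<int>\<close>, \<open>\<int>/k\<int>\<close> discrete, and let
  \<open>L' = L + \<int>(a, t)\<close>. Then \<open>H = H \<times> {0}\<close> is a clopen subgroup of \<open>H'\<close> and \<open>L'\<close> meets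
  \<open>G \<times> H\<close> exactly in \<open>L\<close>; the choice of \<open>k\<close> is what keeps \<open>\<pi>\<^sup>G\<close> injective on \<open>L'\<close>, and
  \<open>(G \<times> H')/L'\<close> is compact because every coset of \<open>L'\<close> meets \<open>G \<times> H\<close>. The set \<open>t + W\<close> is a
  translate of the slice \<open>W \<times> {0}\<close>. Translations preserve precompactness, interiors and both
  kinds of regularity, and a Haar measure on \<open>H'\<close> restricts on the open slice \<open>H \<times> {0}\<close> to a
  Haar measure on \<open>H\<close>, which carries measure-theoretic regularity from \<open>W\<close> to \<open>W \<times> {0}\<close>.\<close>

lemma int_subgroup_iff_Gcd_dvd:
  fixes S :: "int set"
  assumes "0 \<in> S" and "\<And>m n. m \<in> S \<Longrightarrow> n \<in> S \<Longrightarrow> m - n \<in> S"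
  shows "m \<in> S \<longleftrightarrow> Gcd S dvd m"
proof -
  have "group_closure S \<subseteq> S"
  proof
    fix s assume "s \<in> group_closure S"
    then show "s \<in> S" by induction (use assms in auto)
  qed
  then have "group_closure S = S" by (auto intro: group_closure.base)
  then show ?thesis using group_closure_eq[of S] by (auto simp: dvd_def mult.commute)
qed

lemma (in group) int_pow_mem_subgroup_iff_Gcd_dvd:
  assumes P: "subgroup P G" and a: "a \<in> carrier G"
  shows "a [^] (m::int) \<in> P \<longleftrightarrow> Gcd {n. a [^] n \<in> P} dvd m"
proof -
  have "a [^] (m - n) \<in> P" if "a [^] m \<in> P" "a [^] n \<in> P" for m n :: int
    using subgroup.m_closed[OF P that(1) subgroup.m_inv_closed[OF P that(2)]]
    by (simp add: int_pow_diff[OF a])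
  moreover have "a [^] (0::int) \<in> P" using subgroup.one_closed[OF P] by simp
  ultimately show ?thesis by (intro int_subgroup_iff_Gcd_dvd[of "{n. a [^] n \<in> P}", simplified]) auto
qed

lemma hom_rcos_eq:
  assumes e: "group_hom G1 G2 e" and L1: "subgroup L1 G1" and L2: "subgroup L2 G2"
    and eL: "e ` L1 \<subseteq> L2" and u: "u \<in> carrier G1" and v: "v \<in> carrier G1"
    and eq: "L1 #>\<^bsub>G1\<^esub> u = L1 #>\<^bsub>G1\<^esub> v"
  shows "L2 #>\<^bsub>G2\<^esub> e u = L2 #>\<^bsub>G2\<^esub> e v"
proof -
  interpret group_hom G1 G2 e by (rule e)
  have "u \<otimes>\<^bsub>G1\<^esub> inv\<^bsub>G1\<^esub> v \<in> L1"
    using subgroup.rcos_module_imp[OF L1 G.is_group v] G.repr_independenceD[OF L1 u eq[symmetric]] by blast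
  then have "e u \<otimes>\<^bsub>G2\<^esub> inv\<^bsub>G2\<^esub> e v \<in> L2"
    using eL u v by (metis hom_inv hom_mult G.inv_closed image_subset_iff)
  then have "e u \<in> L2 #>\<^bsub>G2\<^esub> e v"
    using subgroup.rcos_module_rev[OF L2 H.is_group] u v by simp
  then show ?thesis
    using H.repr_independence[OF _ _ L2] v by simp
qed

lemma int_pow_DirProd:
  assumes "group G" "group H" "x \<in> carrier G" "y \<in> carrier H"
  shows "(x, y) [^]\<^bsub>G \<times>\<times> H\<^esub> (n::int) = (x [^]\<^bsub>G\<^esub> n, y [^]\<^bsub>H\<^esub> n)"
proof -
  have "fst \<in> hom (G \<times>\<times> H) G" and "snd \<in> hom (G \<times>\<times> H) H"
    by (auto intro: homI)
  then show ?thesis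
    using hom_int_pow[of fst "G \<times>\<times> H" G "(x, y)" n] hom_int_pow[of snd "G \<times>\<times> H" H "(x, y)" n] assms
    by (simp add: DirProd_group prod_eq_iff)
qed

text \<open>Representatives of \<open>\<int>/k\<int>\<close>: \<open>{0..<k}\<close> for \<open>k > 0\<close>, and all of \<open>\<int>\<close> for \<open>k = 0\<close>.\<close>

definition int_residues :: "int \<Rightarrow> int set" where
  "int_residues k = {n. n mod k = n}"

lemma mod_in_int_residues [simp]: "n mod k \<in> int_residues k"
  by (simp add: int_residues_def)

lemma zero_in_int_residues [simp]: "0 \<in> int_residues k"
  by (simp add: int_residues_def)

lemma int_residues_mod: "r \<in> int_residues k \<Longrightarrow> r mod k = r"
  by (simp add: int_residues_def)

lemma int_residues_div: "r \<in> int_residues k \<Longrightarrow> r div k = 0"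
  by (metis int_residues_mod div_mult_mod_eq mult_eq_0_iff add_cancel_right_left div_by_0)

lemma int_residues_eq: "r \<in> int_residues k \<Longrightarrow> s \<in> int_residues k \<Longrightarrow> k dvd r - s \<Longrightarrow> r = s"
  by (metis int_residues_mod mod_eq_dvd_iff)

section \<open>Adjoining a root of an element\<close>

text \<open>For \<open>k \<noteq> 0\<close>, \<open>ext_group H c k\<close> is the quotient \<open>(H \<times> \<int>)/\<langle>(c, -k)\<rangle>\<close>, in which the class \<open>t\<close>
  of \<open>(\<one>, 1)\<close> satisfies \<open>t\<^sup>k = c\<close>: \<open>ext_norm H c k\<close> sends \<open>(h, n)\<close> to the representative of its
  coset whose second coordinate lies in \<open>int_residues k\<close>. For \<open>k = 0\<close> it is \<open>H \<times> \<int>\<close>.\<close>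

definition ext_norm :: "'a monoid \<Rightarrow> 'a \<Rightarrow> int \<Rightarrow> 'a \<times> int \<Rightarrow> 'a \<times> int" where
  "ext_norm H c k = (\<lambda>(h, n). (h \<otimes>\<^bsub>H\<^esub> c [^]\<^bsub>H\<^esub> (n div k), n mod k))"

definition ext_group :: "'a monoid \<Rightarrow> 'a \<Rightarrow> int \<Rightarrow> ('a \<times> int) monoid" where
  "ext_group H c k =
     \<lparr>carrier = carrier H \<times> int_residues k,
      mult = (\<lambda>p q. ext_norm H c k (fst p \<otimes>\<^bsub>H\<^esub> fst q, snd p + snd q)),
      one = (\<one>\<^bsub>H\<^esub>, 0)\<rparr>"

locale ext_comm_group = comm_group H for H :: "'a monoid" (structure) +
  fixes c :: 'a and k :: int
  assumes c_carrier [simp]: "c \<in> carrier H"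
begin

abbreviation H' where "H' \<equiv> ext_group H c k"
abbreviation nrm where "nrm \<equiv> ext_norm H c k"

lemma carrier_ext_group: "carrier H' = carrier H \<times> int_residues k"
  by (simp add: ext_group_def)

lemma one_ext_group: "\<one>\<^bsub>H'\<^esub> = (\<one>, 0)"
  by (simp add: ext_group_def)

lemma mult_ext_group: "p \<otimes>\<^bsub>H'\<^esub> q = nrm (fst p \<otimes> fst q, snd p + snd q)"
  by (simp add: ext_group_def)

lemma ext_norm_carrier: "h \<in> carrier H \<Longrightarrow> nrm (h, n) \<in> carrier H'"
  by (simp add: ext_norm_def carrier_ext_group)

lemma ext_norm_id: "h \<in> carrier H \<Longrightarrow> r \<in> int_residues k \<Longrightarrow> nrm (h, r) = (h, r)"
  by (simp add: ext_norm_def int_residues_div int_residues_mod)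

lemma ext_norm_mult:
  assumes "h \<in> carrier H" "h' \<in> carrier H"
  shows "nrm (h, m) \<otimes>\<^bsub>H'\<^esub> nrm (h', n) = nrm (h \<otimes> h', m + n)"
proof -
  have "h \<otimes> c [^] (m div k) \<otimes> (h' \<otimes> c [^] (n div k)) \<otimes> c [^] ((m mod k + n mod k) div k)
      = h \<otimes> h' \<otimes> (c [^] (m div k) \<otimes> c [^] (n div k) \<otimes> c [^] ((m mod k + n mod k) div k))"
    using assms by (simp add: m_ac)
  also have "\<dots> = h \<otimes> h' \<otimes> c [^] ((m + n) div k)"
    by (simp add: int_pow_mult div_add1_eq[of m n k])
  finally show ?thesis
    by (simp add: mult_ext_group ext_norm_def mod_add_eq)
qed

lemma comm_group_ext_group: "comm_group H'"
proof (rule comm_groupI)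
  fix x y z assume "x \<in> carrier H'" "y \<in> carrier H'" "z \<in> carrier H'"
  then obtain h1 n1 h2 n2 h3 n3
    where "x = (h1, n1)" "y = (h2, n2)" "z = (h3, n3)"
      and h: "h1 \<in> carrier H" "h2 \<in> carrier H" "h3 \<in> carrier H"
      and "n1 \<in> int_residues k" "n2 \<in> int_residues k" "n3 \<in> int_residues k"
    by (auto simp: carrier_ext_group)
  then have xyz: "x = nrm (h1, n1)" "y = nrm (h2, n2)" "z = nrm (h3, n3)"
    by (simp_all add: ext_norm_id)
  have "x \<otimes>\<^bsub>H'\<^esub> y \<otimes>\<^bsub>H'\<^esub> z = nrm (h1 \<otimes> h2 \<otimes> h3, n1 + n2 + n3)"
    using h by (simp add: xyz ext_norm_mult)
  also have "\<dots> = x \<otimes>\<^bsub>H'\<^esub> (y \<otimes>\<^bsub>H'\<^esub> z)"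
    using h by (simp add: xyz ext_norm_mult m_assoc add.assoc)
  finally show "x \<otimes>\<^bsub>H'\<^esub> y \<otimes>\<^bsub>H'\<^esub> z = x \<otimes>\<^bsub>H'\<^esub> (y \<otimes>\<^bsub>H'\<^esub> z)" .
next
  fix x y assume "x \<in> carrier H'" "y \<in> carrier H'"
  then show "x \<otimes>\<^bsub>H'\<^esub> y \<in> carrier H'" and "x \<otimes>\<^bsub>H'\<^esub> y = y \<otimes>\<^bsub>H'\<^esub> x"
    by (auto simp: mult_ext_group carrier_ext_group ext_norm_def m_comm add.commute)
next
  fix x assume x: "x \<in> carrier H'"
  then show "\<one>\<^bsub>H'\<^esub> \<otimes>\<^bsub>H'\<^esub> x = x"
    by (cases x) (auto simp: mult_ext_group one_ext_group carrier_ext_group ext_norm_id)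
  obtain h n where xhn: "x = (h, n)" and h: "h \<in> carrier H" and n: "n \<in> int_residues k"
    using x by (auto simp: carrier_ext_group)
  have "nrm (inv h, - n) \<otimes>\<^bsub>H'\<^esub> x = \<one>\<^bsub>H'\<^esub>"
    using ext_norm_mult[of "inv h" h "- n" n] h n
    by (simp add: xhn ext_norm_id one_ext_group)
  then show "\<exists>y\<in>carrier H'. y \<otimes>\<^bsub>H'\<^esub> x = \<one>\<^bsub>H'\<^esub>"
    using ext_norm_carrier h by blast
qed (simp add: one_ext_group carrier_ext_group)

sublocale H': comm_group H' by (rule comm_group_ext_group)

lemma ext_norm_inv: "h \<in> carrier H \<Longrightarrow> inv\<^bsub>H'\<^esub> (nrm (h, n)) = nrm (inv h, - n)"
  by (rule H'.inv_equality) (simp_all add: ext_norm_mult ext_norm_carrier one_ext_group, simp add: ext_norm_def)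

lemma ext_mult_slice:
  "g \<in> carrier H \<Longrightarrow> r \<in> int_residues k \<Longrightarrow> h \<in> carrier H \<Longrightarrow> (g, r) \<otimes>\<^bsub>H'\<^esub> (h, 0) = (g \<otimes> h, r)"
  by (simp add: mult_ext_group ext_norm_id)

lemma slice_hom: "(\<lambda>h. (h, 0)) \<in> hom H H'"
  by (rule homI) (simp_all add: carrier_ext_group mult_ext_group ext_norm_id)

lemma slice_subgroup: "subgroup (carrier H \<times> {0}) H'"
  using group_hom.img_is_subgroup[of H H' "\<lambda>h. (h, 0)"] slice_hom
  by (simp add: group_hom_def group_hom_axioms_def is_group H'.is_group image_Pair_const)


lemma translation_ext_slice:
  assumes "g \<in> carrier H" "r \<in> int_residues k" "A \<subseteq> carrier H"
  shows "(\<lambda>y. (g, r) \<otimes>\<^bsub>H'\<^esub> y) ` (A \<times> {0}) = (\<lambda>h. g \<otimes> h) ` A \<times> {r}"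
  using assms by (force simp: ext_mult_slice)

lemma ext_norm_eqD:
  assumes "h \<in> carrier H" "h' \<in> carrier H" "nrm (h, m) = nrm (h', n)"
  shows "m = n + k * (m div k - n div k) \<and> h' = h \<otimes> c [^] (m div k - n div k)"
proof
  have "m mod k = n mod k" using assms(3) by (simp add: ext_norm_def)
  then show "m = n + k * (m div k - n div k)"
    using mult_div_mod_eq[of k m] mult_div_mod_eq[of k n] unfolding right_diff_distrib by linarith
  have "h \<otimes> c [^] (m div k) = h' \<otimes> c [^] (n div k)" using assms(3) by (simp add: ext_norm_def)
  then have "h \<otimes> c [^] (m div k) \<otimes> c [^] (- (n div k)) = h'"
    using assms(1,2) by (simp add: m_assoc int_pow_mult[symmetric])
  then show "h' = h \<otimes> c [^] (m div k - n div k)"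
    using assms(1) by (simp add: m_assoc flip: int_pow_mult)
qed

end

definition quotient_topology :: "'a topology \<Rightarrow> ('a \<Rightarrow> 'b) \<Rightarrow> 'b topology" where
  "quotient_topology Z f = topology (\<lambda>U. U \<subseteq> f ` topspace Z \<and> openin Z {x \<in> topspace Z. f x \<in> U})"

lemma openin_quotient_topology:
  "openin (quotient_topology Z f) U \<longleftrightarrow> U \<subseteq> f ` topspace Z \<and> openin Z {x \<in> topspace Z. f x \<in> U}"
proof -
  have "istopology (\<lambda>U. U \<subseteq> f ` topspace Z \<and> openin Z {x \<in> topspace Z. f x \<in> U})"
  proof -
    have "{x \<in> topspace Z. f x \<in> S \<inter> T} = {x \<in> topspace Z. f x \<in> S} \<inter> {x \<in> topspace Z. f x \<in> T}"
      and "{x \<in> topspace Z. f x \<in> \<Union>\<K>} = (\<Union>U\<in>\<K>. {x \<in> topspace Z. f x \<in> U})"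
      for S T \<K>
      by auto
    then show ?thesis
      unfolding istopology_def by (auto intro!: openin_Int openin_Union)
  qed
  then show ?thesis
    by (simp add: quotient_topology_def topology_inverse')
qed

lemma topspace_quotient_topology: "topspace (quotient_topology Z f) = f ` topspace Z"
proof -
  have "{x \<in> topspace Z. f x \<in> f ` topspace Z} = topspace Z"
    by auto
  then have "openin (quotient_topology Z f) (f ` topspace Z)"
    by (simp add: openin_quotient_topology)
  then show ?thesis
    using openin_subset openin_quotient_topology[of Z f "topspace (quotient_topology Z f)"] by blast
qed

lemma quotient_map_quotient_topology: "quotient_map Z (quotient_topology Z f) f"
  by (auto simp: quotient_map_def topspace_quotient_topology openin_quotient_topology)

lemma compact_space_quotient_map_factor:
  assumes f: "quotient_map Z Q f" and Q: "compact_space Q"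
    and f': "quotient_map Z' Q' f'" and e: "continuous_map Z Z' e"
    and fibres: "\<And>x y. x \<in> topspace Z \<Longrightarrow> y \<in> topspace Z \<Longrightarrow> f x = f y \<Longrightarrow> f' (e x) = f' (e y)"
    and surj: "topspace Q' \<subseteq> f' ` e ` topspace Z"
  shows "compact_space Q'"
proof -
  have cont: "continuous_map Z Q' (f' \<circ> e)"
    using continuous_map_compose[OF e quotient_imp_continuous_map[OF f']] .
  obtain g where g: "continuous_map Q Q' g" "g ` topspace Q = (f' \<circ> e) ` topspace Z"
    using quotient_map_lift_exists[OF f cont] fibres by (metis comp_apply)
  have "g ` topspace Q = topspace Q'"
    using g(2) surj continuous_map_image_subset_topspace[OF cont] by auto
  then show ?thesis
    using image_compactin[OF Q[unfolded compact_space_def] g(1)] by (simp add: compact_space_def)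
qed

lemma continuous_map_open_cover:
  assumes "\<And>i. i \<in> I \<Longrightarrow> openin Z (S i)" and "topspace Z \<subseteq> (\<Union>i\<in>I. S i)"
    and "\<And>i. i \<in> I \<Longrightarrow> continuous_map Z Y (g i)"
    and "\<And>i x. i \<in> I \<Longrightarrow> x \<in> S i \<Longrightarrow> f x = g i x"
  shows "continuous_map Z Y f"
proof (rule pasting_lemma[where T = S and f = "\<lambda>_. f"])
  fix i assume i: "i \<in> I"
  show "continuous_map (subtopology Z (S i)) Y f"
    by (rule continuous_map_eq[OF continuous_map_from_subtopology[OF assms(3)[OF i]]])
       (use assms(4)[OF i] in auto)
qed (use assms(1,2) in auto)

lemma lca_group_topspace: "lca_group Gr T \<Longrightarrow> topspace T = carrier Gr"
  by (simp add: lca_group_def)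

lemma lca_group_continuous_map_mult:
  assumes "lca_group Gr T" "continuous_map Z T f" "continuous_map Z T g"
  shows "continuous_map Z T (\<lambda>x. f x \<otimes>\<^bsub>Gr\<^esub> g x)"
proof -
  have "continuous_map (prod_topology T T) T (\<lambda>(x, y). x \<otimes>\<^bsub>Gr\<^esub> y)"
    using assms(1) by (simp add: lca_group_def)
  from continuous_map_compose[OF continuous_map_pairedI[OF assms(2,3)] this] show ?thesis
    by (simp add: comp_def)
qed

lemma lca_group_continuous_map_inv:
  assumes "lca_group Gr T" "continuous_map Z T f"
  shows "continuous_map Z T (\<lambda>x. inv\<^bsub>Gr\<^esub> f x)"
proof -
  have "continuous_map T T (\<lambda>x. inv\<^bsub>Gr\<^esub> x)"
    using assms(1) by (simp add: lca_group_def)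
  from continuous_map_compose[OF assms(2) this] show ?thesis
    by (simp add: comp_def)
qed

lemma lca_group_continuous_map_const:
  "lca_group Gr T \<Longrightarrow> x \<in> carrier Gr \<Longrightarrow> continuous_map Z T (\<lambda>_. x)"
  by (simp add: lca_group_topspace)

lemma lca_group_homeomorphic_translation:
  assumes lca: "lca_group Gr T" and x: "x \<in> carrier Gr"
  shows "homeomorphic_map T T (\<lambda>y. x \<otimes>\<^bsub>Gr\<^esub> y)"
proof -
  interpret comm_group Gr using lca by (simp add: lca_group_def)
  have "continuous_map T T (\<lambda>y. z \<otimes>\<^bsub>Gr\<^esub> y)" if "z \<in> carrier Gr" for z
    using lca that
    by (intro lca_group_continuous_map_mult lca_group_continuous_map_const) (simp_all add: continuous_map_id[unfolded id_def])
  then have "homeomorphic_maps T T (\<lambda>y. x \<otimes>\<^bsub>Gr\<^esub> y) (\<lambda>y. inv\<^bsub>Gr\<^esub> x \<otimes>\<^bsub>Gr\<^esub> y)"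
    using x lca_group_topspace[OF lca] by (simp add: homeomorphic_maps_def m_assoc[symmetric])
  then show ?thesis using homeomorphic_map_maps by blast
qed

definition borel_of :: "'a topology \<Rightarrow> 'a measure" where
  "borel_of Z = sigma (topspace Z) {U. openin Z U}"

lemma sets_borel_of: "sets (borel_of Z) = sigma_sets (topspace Z) {U. openin Z U}"
  unfolding borel_of_def by (rule sets_measure_of) (auto dest: openin_subset)

lemma space_borel_of: "space (borel_of Z) = topspace Z"
  unfolding borel_of_def by (rule space_measure_of) (auto dest: openin_subset)

lemma openin_in_borel_of: "openin Z U \<Longrightarrow> U \<in> sets (borel_of Z)"
  by (simp add: sets_borel_of sigma_sets.Basic)

lemma closedin_in_borel_of: "closedin Z C \<Longrightarrow> C \<in> sets (borel_of Z)"
  using sets.compl_sets[OF openin_in_borel_of[of Z "topspace Z - C"]]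
  by (simp add: closedin_def space_borel_of double_diff)

lemma homeomorphic_image_in_borel_of:
  assumes f: "homeomorphic_map Z Y f" and A: "A \<in> sets (borel_of Z)"
  shows "f ` A \<in> sets (borel_of Y)"
  using A unfolding sets_borel_of
proof induct
  case (Basic U)
  then show ?case using homeomorphic_map_openness_eq[OF f] by (auto intro: sigma_sets.Basic)
next
  case (Compl A)
  have "A \<subseteq> topspace Z"
    using sigma_sets_into_sp[OF _ Compl(1)] openin_subset by blast
  then have "f ` (topspace Z - A) = f ` topspace Z - f ` A"
    using inj_on_image_set_diff[OF homeomorphic_imp_injective_map[OF f]] by blast
  then show ?case
    using sigma_sets.Compl[OF Compl(2)] homeomorphic_imp_surjective_map[OF f] by simp
next
  case (Union A)
  then show ?case by (simp add: image_UN sigma_sets.Union)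
qed (simp add: sigma_sets.Empty)

lemma haar_measure_sets: "haar_measure Gr T \<mu> \<Longrightarrow> sets \<mu> = sets (borel_of T)"
  by (simp add: haar_measure_def sets_borel_of)

lemma boundary_in_borel_of: "Z closure_of W - Z interior_of W \<in> sets (borel_of Z)"
  by (intro sets.Diff closedin_in_borel_of openin_in_borel_of) auto

context
  fixes Gr :: "('a, 'm) monoid_scheme" and T :: "'a topology" and x :: 'a and W :: "'a set"
  assumes lca: "lca_group Gr T" and x: "x \<in> carrier Gr" and W: "W \<subseteq> carrier Gr"
begin

private lemma translation_homeo: "homeomorphic_map T T (\<lambda>y. x \<otimes>\<^bsub>Gr\<^esub> y)"
  by (rule lca_group_homeomorphic_translation[OF lca x])

private lemma W_topspace: "W \<subseteq> topspace T"
  using W lca_group_topspace[OF lca] by simp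

lemma closure_of_translation:
  "T closure_of ((\<lambda>y. x \<otimes>\<^bsub>Gr\<^esub> y) ` W) = (\<lambda>y. x \<otimes>\<^bsub>Gr\<^esub> y) ` (T closure_of W)"
  by (rule homeomorphic_map_closure_of[OF translation_homeo W_topspace])

lemma interior_of_translation:
  "T interior_of ((\<lambda>y. x \<otimes>\<^bsub>Gr\<^esub> y) ` W) = (\<lambda>y. x \<otimes>\<^bsub>Gr\<^esub> y) ` (T interior_of W)"
  by (rule homeomorphic_map_interior_of[OF translation_homeo W_topspace])

lemma precompact_in_translation:
  "precompact_in T W \<Longrightarrow> precompact_in T ((\<lambda>y. x \<otimes>\<^bsub>Gr\<^esub> y) ` W)"
  unfolding precompact_in_def closure_of_translation
  using homeomorphic_map_compactness[OF translation_homeo closure_of_subset_topspace] by simp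

lemma nonempty_interior_translation:
  "nonempty_interior T W \<Longrightarrow> nonempty_interior T ((\<lambda>y. x \<otimes>\<^bsub>Gr\<^esub> y) ` W)"
  by (simp add: nonempty_interior_def interior_of_translation)

lemma top_regular_translation:
  "top_regular T W \<Longrightarrow> top_regular T ((\<lambda>y. x \<otimes>\<^bsub>Gr\<^esub> y) ` W)"
  unfolding top_regular_def closure_of_translation interior_of_translation
  using homeomorphic_map_closure_of[OF translation_homeo interior_of_subset_topspace] by simp

lemma mt_regular_translation:
  assumes "mt_regular Gr T W"
  shows "mt_regular Gr T ((\<lambda>y. x \<otimes>\<^bsub>Gr\<^esub> y) ` W)"
  unfolding mt_regular_def
proof (intro allI impI)
  fix \<mu> assume haar: "haar_measure Gr T \<mu>"
  let ?B = "T closure_of W - T interior_of W"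
  have "T closure_of ((\<lambda>y. x \<otimes>\<^bsub>Gr\<^esub> y) ` W) - T interior_of ((\<lambda>y. x \<otimes>\<^bsub>Gr\<^esub> y) ` W)
      = (\<lambda>y. x \<otimes>\<^bsub>Gr\<^esub> y) ` ?B"
    unfolding closure_of_translation interior_of_translation
    by (rule inj_on_image_set_diff[OF homeomorphic_imp_injective_map[OF translation_homeo], symmetric])
       (use closure_of_subset_topspace[of T W] interior_of_subset_topspace[of T W] in auto)
  also have "emeasure \<mu> \<dots> = emeasure \<mu> ?B"
    using haar x boundary_in_borel_of[of T W] by (simp add: haar_measure_def sets_borel_of)
  also have "\<dots> = 0"
    using assms haar by (simp add: mt_regular_def)
  finally show "emeasure \<mu> (T closure_of ((\<lambda>y. x \<otimes>\<^bsub>Gr\<^esub> y) ` W) - T interior_of ((\<lambda>y. x \<otimes>\<^bsub>Gr\<^esub> y) ` W)) = 0" .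
qed

end

section \<open>The topology of the extension\<close>

definition ext_topology :: "'a topology \<Rightarrow> int \<Rightarrow> ('a \<times> int) topology" where
  "ext_topology T k = prod_topology T (discrete_topology (int_residues k))"

locale ext_lca = ext_comm_group H c k for H :: "'a monoid" (structure) and c k +
  fixes T :: "'a topology"
  assumes lca: "lca_group H T"
begin

abbreviation T' where "T' \<equiv> ext_topology T k"

lemma topspace_T [simp]: "topspace T = carrier H"
  using lca by (simp add: lca_group_def)

lemma topspace_ext_topology: "topspace T' = carrier H'"
  by (simp add: ext_topology_def carrier_ext_group)

lemma openin_carrier [simp]: "openin T (carrier H)"
  using openin_topspace[of T] by simp

lemma closedin_carrier [simp]: "closedin T (carrier H)"
  using closedin_topspace[of T] by simp

lemma openin_ext_slice: "openin T A \<Longrightarrow> r \<in> int_residues k \<Longrightarrow> openin T' (A \<times> {r})"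
  by (simp add: ext_topology_def openin_prod_Times_iff)

lemma compactin_ext_slice: "compactin T K \<Longrightarrow> r \<in> int_residues k \<Longrightarrow> compactin T' (K \<times> {r})"
  by (simp add: ext_topology_def compactin_Times)

lemma closure_of_ext_slice: "r \<in> int_residues k \<Longrightarrow> T' closure_of (A \<times> {r}) = (T closure_of A) \<times> {r}"
  by (simp add: ext_topology_def closure_of_Times discrete_topology_closure_of)

lemma interior_of_ext_slice: "r \<in> int_residues k \<Longrightarrow> T' interior_of (A \<times> {r}) = (T interior_of A) \<times> {r}"
  by (simp add: ext_topology_def interior_of_Times)

lemma continuous_map_slice: "continuous_map T T' (\<lambda>h. (h, 0))"
  by (auto simp: ext_topology_def intro!: continuous_map_pairedI)

lemma continuous_map_ext_mult: "continuous_map (prod_topology T' T') T' (\<lambda>(p, q). p \<otimes>\<^bsub>H'\<^esub> q)"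
proof (rule continuous_map_open_cover[where I = "int_residues k \<times> int_residues k"
      and S = "\<lambda>(m, n). (carrier H \<times> {m}) \<times> (carrier H \<times> {n})"
      and g = "\<lambda>(m, n) z. (fst (fst z) \<otimes> fst (snd z) \<otimes> c [^] ((m + n) div k), (m + n) mod k)"])
  have fst_fst: "continuous_map (prod_topology T' T') T (\<lambda>z. fst (fst z))"
    and fst_snd: "continuous_map (prod_topology T' T') T (\<lambda>z. fst (snd z))"
    using continuous_map_compose[OF continuous_map_fst continuous_map_fst]
      continuous_map_compose[OF continuous_map_snd continuous_map_fst]
    by (simp_all add: ext_topology_def comp_def)
  fix i assume "i \<in> int_residues k \<times> int_residues k"
  then obtain m n where i: "i = (m, n)" and "m \<in> int_residues k" "n \<in> int_residues k" by blast
  then show "openin (prod_topology T' T') ((\<lambda>(m, n). (carrier H \<times> {m}) \<times> (carrier H \<times> {n})) i)"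
    by (simp add: openin_prod_Times_iff openin_ext_slice)
  show "continuous_map (prod_topology T' T') T'
      ((\<lambda>(m, n) z. (fst (fst z) \<otimes> fst (snd z) \<otimes> c [^] ((m + n) div k), (m + n) mod k)) i)"
    unfolding i
    by (auto simp: ext_topology_def intro!: continuous_map_pairedI lca_group_continuous_map_mult[OF lca]
        lca_group_continuous_map_const[OF lca] fst_fst[unfolded ext_topology_def]
        fst_snd[unfolded ext_topology_def])
qed (auto simp: topspace_ext_topology carrier_ext_group mult_ext_group ext_norm_def)

lemma continuous_map_ext_inv: "continuous_map T' T' (\<lambda>p. inv\<^bsub>H'\<^esub> p)"
proof (rule continuous_map_open_cover[where I = "int_residues k" and S = "\<lambda>n. carrier H \<times> {n}"
      and g = "\<lambda>n p. (inv (fst p) \<otimes> c [^] ((- n) div k), (- n) mod k)"])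
  fix n assume n: "n \<in> int_residues k"
  show "continuous_map T' T' (\<lambda>p. (inv (fst p) \<otimes> c [^] ((- n) div k), (- n) mod k))"
    unfolding ext_topology_def
    by (auto intro!: continuous_map_pairedI lca_group_continuous_map_mult[OF lca]
        lca_group_continuous_map_inv[OF lca] lca_group_continuous_map_const[OF lca] continuous_map_fst)
  show "inv\<^bsub>H'\<^esub> p = (inv (fst p) \<otimes> c [^] ((- n) div k), (- n) mod k)" if p: "p \<in> carrier H \<times> {n}" for p
  proof -
    obtain h where p: "p = (h, n)" and h: "h \<in> carrier H" using p by auto
    then have "inv\<^bsub>H'\<^esub> p = nrm (inv h, - n)" using ext_norm_inv[of h n] ext_norm_id[of h n] n by simp
    then show ?thesis by (simp add: p ext_norm_def)
  qed
qed (auto simp: openin_ext_slice topspace_ext_topology carrier_ext_group)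

lemma lca_group_ext: "lca_group H' T'"
  unfolding lca_group_def
proof (intro conjI)
  show "Hausdorff_space T'" and "locally_compact_space T'"
    using lca
    by (simp_all add: lca_group_def ext_topology_def Hausdorff_space_prod_topology
        locally_compact_space_prod_topology locally_compact_space_discrete_topology)
qed (simp_all add: comm_group_ext_group topspace_ext_topology continuous_map_ext_mult continuous_map_ext_inv)

lemma openin_ext_base: "openin T' (carrier H \<times> {0})"
  by (simp add: openin_ext_slice)

lemma closedin_ext_base: "closedin T' (carrier H \<times> {0})"
  by (simp add: ext_topology_def closedin_prod_Times_iff)

lemma homeomorphic_ext_base: "homeomorphic_map T (subtopology T' (carrier H \<times> {0})) (\<lambda>h. (h, 0))"
proof -
  have "subtopology T' (carrier H \<times> {0}) = prod_topology T (discrete_topology {0})"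
    by (simp add: ext_topology_def subtopology_Times flip: topspace_T)
  moreover have "homeomorphic_maps T (prod_topology T (discrete_topology {0})) (\<lambda>h. (h, 0)) fst"
    by (auto simp: homeomorphic_maps_def intro!: continuous_map_pairedI continuous_map_fst)
  ultimately show ?thesis
    using homeomorphic_map_maps by metis
qed

lemma metrizable_ext: "metrizable_space T \<Longrightarrow> metrizable_space T'"
  by (simp add: ext_topology_def metrizable_space_prod_topology)

section \<open>Restricting a Haar measure to the slice\<close>

definition slice_measure :: "('a \<times> int) measure \<Rightarrow> 'a measure" where
  "slice_measure \<mu> = distr (restrict_space \<mu> (carrier H \<times> {0})) (borel_of T) fst"

context
  fixes \<mu> assumes haar: "haar_measure H' T' \<mu>"
begin

private lemma sets_haar: "sets \<mu> = sets (borel_of T')"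
  by (rule haar_measure_sets[OF haar])

private lemma space_haar: "space \<mu> = carrier H \<times> int_residues k"
  using haar by (simp add: haar_measure_def topspace_ext_topology carrier_ext_group)

private lemma openin_in_haar: "openin T' U \<Longrightarrow> U \<in> sets \<mu>"
  by (simp add: sets_haar openin_in_borel_of)

private lemma base_Int_space: "carrier H \<times> {0} \<inter> space \<mu> \<in> sets \<mu>"
proof -
  have "carrier H \<times> {0} \<inter> space \<mu> = carrier H \<times> {0}" by (auto simp: space_haar)
  then show ?thesis by (simp add: openin_in_haar openin_ext_base)
qed

private lemma sets_restrict_base:
  "A \<in> sets (restrict_space \<mu> (carrier H \<times> {0})) \<longleftrightarrow> A \<subseteq> carrier H \<times> {0} \<and> A \<in> sets \<mu>"
  by (rule sets_restrict_space_iff[OF base_Int_space])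

private lemma measurable_fst_base: "fst \<in> restrict_space \<mu> (carrier H \<times> {0}) \<rightarrow>\<^sub>M borel_of T"
  unfolding borel_of_def
proof (rule measurable_measure_of)
  fix U assume "U \<in> {U. openin T U}"
  then have "openin T U" and "U \<subseteq> carrier H" using openin_subset by fastforce+
  moreover have "fst -` U \<inter> space (restrict_space \<mu> (carrier H \<times> {0})) = U \<times> {0}"
    using \<open>U \<subseteq> carrier H\<close> by (auto simp: space_restrict_space space_haar)
  ultimately show "fst -` U \<inter> space (restrict_space \<mu> (carrier H \<times> {0})) \<in> sets (restrict_space \<mu> (carrier H \<times> {0}))"
    using openin_in_haar[OF openin_ext_slice[OF _ zero_in_int_residues]] by (auto simp: sets_restrict_base)
qed (use openin_subset[of T] in \<open>auto simp: space_restrict_space space_haar\<close>)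

private lemma haar_outer_regular:
  "A \<in> sets \<mu> \<Longrightarrow> emeasure \<mu> A = (INF U\<in>{U. openin T' U \<and> A \<subseteq> U}. emeasure \<mu> U)"
  using haar unfolding haar_measure_def by blast

private lemma haar_inner_regular:
  "openin T' U \<Longrightarrow> emeasure \<mu> U = (SUP K\<in>{K. compactin T' K \<and> K \<subseteq> U}. emeasure \<mu> K)"
  using haar unfolding haar_measure_def by blast

private lemma borel_subset_carrier: "A \<in> sets (borel_of T) \<Longrightarrow> A \<subseteq> carrier H"
  using sets.sets_into_space[of A "borel_of T"] by (simp add: space_borel_of)

private lemma fst_preimage_base:
  "A \<subseteq> carrier H \<Longrightarrow> fst -` A \<inter> space (restrict_space \<mu> (carrier H \<times> {0})) = A \<times> {0}"
  by (auto simp: space_restrict_space space_haar)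

lemma slice_in_haar_sets: "A \<in> sets (borel_of T) \<Longrightarrow> A \<times> {0} \<in> sets \<mu>"
  using measurable_sets[OF measurable_fst_base] fst_preimage_base[OF borel_subset_carrier]
  by (metis sets_restrict_base)

lemma emeasure_slice_measure:
  assumes "A \<in> sets (borel_of T)"
  shows "emeasure (slice_measure \<mu>) A = emeasure \<mu> (A \<times> {0})"
proof -
  have "emeasure (slice_measure \<mu>) A = emeasure (restrict_space \<mu> (carrier H \<times> {0})) (A \<times> {0})"
    unfolding slice_measure_def emeasure_distr[OF measurable_fst_base assms]
    using fst_preimage_base[OF borel_subset_carrier[OF assms]] by simp
  also have "\<dots> = emeasure \<mu> (A \<times> {0})"
    using borel_subset_carrier[OF assms]
    by (intro emeasure_restrict_space[OF base_Int_space]) auto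
  finally show ?thesis .
qed

lemma sets_slice_measure: "sets (slice_measure \<mu>) = sets (borel_of T)"
  by (simp add: slice_measure_def)

lemma space_slice_measure: "space (slice_measure \<mu>) = carrier H"
  by (simp add: slice_measure_def space_borel_of)

text \<open>If the base slice were null, so would be each of its countably many translates
  \<open>carrier H \<times> {r}\<close>, which cover \<open>H'\<close>.\<close>

lemma slice_measure_nonzero: "emeasure (slice_measure \<mu>) (carrier H) \<noteq> 0"
proof
  assume "emeasure (slice_measure \<mu>) (carrier H) = 0"
  then have base_null: "emeasure \<mu> (carrier H \<times> {0}) = 0"
    using emeasure_slice_measure[of "carrier H"] by (simp add: openin_in_borel_of)
  have "carrier H \<times> {r} \<in> null_sets \<mu>" if r: "r \<in> int_residues k" for r
  proof -
    have "carrier H \<times> {r} = (\<lambda>y. (\<one>, r) \<otimes>\<^bsub>H'\<^esub> y) ` (carrier H \<times> {0})"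
      using translation_ext_slice[OF one_closed r order_refl] by simp
    then have "emeasure \<mu> (carrier H \<times> {r}) = emeasure \<mu> (carrier H \<times> {0})"
      using haar r by (simp add: haar_measure_def carrier_ext_group openin_in_haar openin_ext_base)
    then show ?thesis using base_null r by (simp add: null_sets_def openin_in_haar openin_ext_slice)
  qed
  then have "(\<Union>r\<in>int_residues k. carrier H \<times> {r}) \<in> null_sets \<mu>"
    by (intro null_sets_UN') auto
  moreover have "(\<Union>r\<in>int_residues k. carrier H \<times> {r}) = topspace T'"
    by (auto simp: topspace_ext_topology carrier_ext_group)
  ultimately have "emeasure \<mu> (topspace T') = 0" by (metis null_setsD1)
  then show False
    using haar by (simp add: haar_measure_def)
qed

lemma slice_measure_translation:
  assumes x: "x \<in> carrier H" and A: "A \<in> sets (borel_of T)"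
  shows "emeasure (slice_measure \<mu>) ((\<lambda>y. x \<otimes> y) ` A) = emeasure (slice_measure \<mu>) A"
proof -
  have "(\<lambda>y. x \<otimes> y) ` A \<in> sets (borel_of T)"
    by (rule homeomorphic_image_in_borel_of[OF lca_group_homeomorphic_translation[OF lca x] A])
  then have "emeasure (slice_measure \<mu>) ((\<lambda>y. x \<otimes> y) ` A) = emeasure \<mu> ((\<lambda>y. x \<otimes> y) ` A \<times> {0})"
    by (rule emeasure_slice_measure)
  also have "\<dots> = emeasure \<mu> ((\<lambda>y. (x, 0) \<otimes>\<^bsub>H'\<^esub> y) ` (A \<times> {0}))"
    using translation_ext_slice[OF x zero_in_int_residues borel_subset_carrier[OF A]] by simp
  also have "\<dots> = emeasure \<mu> (A \<times> {0})"
    using haar x slice_in_haar_sets[OF A] by (simp add: haar_measure_def carrier_ext_group)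
  finally show ?thesis using emeasure_slice_measure[OF A] by simp
qed

lemma slice_measure_compact_finite:
  assumes "compactin T K"
  shows "emeasure (slice_measure \<mu>) K < \<infinity>"
proof -
  have "closedin T K"
    using compactin_imp_closedin assms lca by (auto simp: lca_group_def)
  then show ?thesis
    using haar compactin_ext_slice[OF assms zero_in_int_residues]
    by (simp add: haar_measure_def emeasure_slice_measure closedin_in_borel_of)
qed

lemma slice_measure_outer_regular:
  assumes A: "A \<in> sets (borel_of T)"
  shows "emeasure (slice_measure \<mu>) A = (INF U\<in>{U. openin T U \<and> A \<subseteq> U}. emeasure (slice_measure \<mu>) U)"
proof -
  have "emeasure (slice_measure \<mu>) A = (INF U'\<in>{U'. openin T' U' \<and> A \<times> {0} \<subseteq> U'}. emeasure \<mu> U')"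
    using haar_outer_regular[OF slice_in_haar_sets[OF A]] by (simp add: emeasure_slice_measure[OF A])
  also have "\<dots> = (INF U\<in>{U. openin T U \<and> A \<subseteq> U}. emeasure (slice_measure \<mu>) U)"
  proof (rule INF_eq)
    fix U' assume U': "U' \<in> {U'. openin T' U' \<and> A \<times> {0} \<subseteq> U'}"
    define U where "U = {h \<in> topspace T. (h, 0) \<in> U'}"
    have "openin T U"
      unfolding U_def by (rule openin_continuous_map_preimage[OF continuous_map_slice]) (use U' in simp)
    moreover have "A \<subseteq> U" using U' borel_subset_carrier[OF A] by (auto simp: U_def)
    moreover have "emeasure (slice_measure \<mu>) U \<le> emeasure \<mu> U'"
      using \<open>openin T U\<close> U' openin_in_haar
      by (auto simp: emeasure_slice_measure openin_in_borel_of U_def intro!: emeasure_mono)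
    ultimately show "\<exists>U\<in>{U. openin T U \<and> A \<subseteq> U}. emeasure (slice_measure \<mu>) U \<le> emeasure \<mu> U'"
      by blast
  next
    fix U assume "U \<in> {U. openin T U \<and> A \<subseteq> U}"
    then show "\<exists>U'\<in>{U'. openin T' U' \<and> A \<times> {0} \<subseteq> U'}. emeasure \<mu> U' \<le> emeasure (slice_measure \<mu>) U"
      by (intro bexI[of _ "U \<times> {0}"]) (auto simp: openin_ext_slice emeasure_slice_measure openin_in_borel_of)
  qed
  finally show ?thesis .
qed

lemma slice_measure_inner_regular:
  assumes U: "openin T U"
  shows "emeasure (slice_measure \<mu>) U = (SUP K\<in>{K. compactin T K \<and> K \<subseteq> U}. emeasure (slice_measure \<mu>) K)"
proof -
  have Hausdorff: "Hausdorff_space T" using lca by (simp add: lca_group_def)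
  have "emeasure (slice_measure \<mu>) U = (SUP K'\<in>{K'. compactin T' K' \<and> K' \<subseteq> U \<times> {0}}. emeasure \<mu> K')"
    using haar_inner_regular[OF openin_ext_slice[OF U zero_in_int_residues]]
    by (simp add: emeasure_slice_measure openin_in_borel_of U)
  also have "\<dots> = (SUP K\<in>{K. compactin T K \<and> K \<subseteq> U}. emeasure (slice_measure \<mu>) K)"
  proof (rule SUP_eq)
    fix K' assume K': "K' \<in> {K'. compactin T' K' \<and> K' \<subseteq> U \<times> {0}}"
    then have "K' = fst ` K' \<times> {0}" by force
    moreover have "compactin T (fst ` K')"
      using K' image_compactin[of T' K' T fst] continuous_map_fst by (auto simp: ext_topology_def)
    ultimately show "\<exists>K\<in>{K. compactin T K \<and> K \<subseteq> U}. emeasure \<mu> K' \<le> emeasure (slice_measure \<mu>) K"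
      using K' compactin_imp_closedin[OF Hausdorff]
      by (intro bexI[of _ "fst ` K'"]) (auto simp: emeasure_slice_measure closedin_in_borel_of)
  next
    fix K assume "K \<in> {K. compactin T K \<and> K \<subseteq> U}"
    then show "\<exists>K'\<in>{K'. compactin T' K' \<and> K' \<subseteq> U \<times> {0}}. emeasure (slice_measure \<mu>) K \<le> emeasure \<mu> K'"
      using compactin_imp_closedin[OF Hausdorff]
      by (intro bexI[of _ "K \<times> {0}"]) (auto simp: compactin_ext_slice emeasure_slice_measure closedin_in_borel_of)
  qed
  finally show ?thesis .
qed

lemma haar_measure_slice_measure: "haar_measure H T (slice_measure \<mu>)"
  unfolding haar_measure_def
proof (intro conjI ballI allI impI)
  show "space (slice_measure \<mu>) = topspace T"
    and "sets (slice_measure \<mu>) = sigma_sets (topspace T) {U. openin T U}"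
    and "emeasure (slice_measure \<mu>) (topspace T) \<noteq> 0"
    using slice_measure_nonzero by (simp_all add: space_slice_measure sets_slice_measure sets_borel_of)
qed (simp_all only: sets_slice_measure slice_measure_translation slice_measure_compact_finite
    slice_measure_outer_regular[symmetric] slice_measure_inner_regular[symmetric])

end

lemma precompact_in_ext_slice: "precompact_in T W \<Longrightarrow> precompact_in T' (W \<times> {0})"
  by (simp add: precompact_in_def closure_of_ext_slice compactin_ext_slice)

lemma nonempty_interior_ext_slice: "nonempty_interior T W \<Longrightarrow> nonempty_interior T' (W \<times> {0})"
  by (simp add: nonempty_interior_def interior_of_ext_slice)

lemma top_regular_ext_slice: "top_regular T W \<Longrightarrow> top_regular T' (W \<times> {0})"
  by (simp add: top_regular_def closure_of_ext_slice interior_of_ext_slice)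

lemma mt_regular_ext_slice:
  assumes "mt_regular H T W"
  shows "mt_regular H' T' (W \<times> {0})"
  unfolding mt_regular_def
proof (intro allI impI)
  fix \<mu> assume haar: "haar_measure H' T' \<mu>"
  have "T' closure_of (W \<times> {0}) - T' interior_of (W \<times> {0}) = (T closure_of W - T interior_of W) \<times> {0}"
    by (auto simp: closure_of_ext_slice interior_of_ext_slice)
  also have "emeasure \<mu> \<dots> = emeasure (slice_measure \<mu>) (T closure_of W - T interior_of W)"
    by (rule emeasure_slice_measure[OF haar boundary_in_borel_of, symmetric])
  also have "\<dots> = 0"
    using assms haar_measure_slice_measure[OF haar] unfolding mt_regular_def by blast
  finally show "emeasure \<mu> (T' closure_of (W \<times> {0}) - T' interior_of (W \<times> {0})) = 0" .
qed

end

section \<open>The extended cut-and-project scheme\<close>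

locale cut_and_project_point = G: comm_group G + H: comm_group H
  for G :: "'g monoid" (structure) and H :: "'h monoid" +
  fixes TG :: "'g topology" and TH :: "'h topology" and L :: "('g \<times> 'h) set" and a :: 'g
  assumes cps: "cut_and_project G TG H TH L" and a_carrier [simp]: "a \<in> carrier G"
begin

lemma lca_G: "lca_group G TG" and lca_H: "lca_group H TH"
  and lattice_L: "is_lattice (G \<times>\<times> H) (prod_topology TG TH) L"
  and inj_on_fst_L: "inj_on fst L" and dense_L: "TH closure_of (snd ` L) = carrier H"
  using cps by (auto simp: cut_and_project_def)

lemma subgroup_L: "subgroup L (G \<times>\<times> H)"
  using lattice_L by (simp add: is_lattice_def)

lemma L_carrier: "(x, y) \<in> L \<Longrightarrow> x \<in> carrier G \<and> y \<in> carrier H"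
  using subgroup.subset[OF subgroup_L] by auto

lemma one_in_L: "(\<one>, \<one>\<^bsub>H\<^esub>) \<in> L"
  using subgroup.one_closed[OF subgroup_L] by simp

lemma L_mult: "(x, y) \<in> L \<Longrightarrow> (x', y') \<in> L \<Longrightarrow> (x \<otimes> x', y \<otimes>\<^bsub>H\<^esub> y') \<in> L"
  using subgroup.m_closed[OF subgroup_L] by fastforce

lemma L_inv:
  assumes "(x, y) \<in> L"
  shows "(inv x, inv\<^bsub>H\<^esub> y) \<in> L"
  using subgroup.m_inv_closed[OF subgroup_L assms] L_carrier[OF assms]
  by (simp add: G.is_group H.is_group)

lemma L_int_pow:
  assumes "(x, y) \<in> L"
  shows "(x [^] (n::int), y [^]\<^bsub>H\<^esub> n) \<in> L"
  using group.subgroup_int_pow_closed[OF DirProd_group[OF G.is_group H.is_group] subgroup_L assms]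
    L_carrier[OF assms]
  by (simp add: int_pow_DirProd G.is_group H.is_group)

lemma subgroup_fst_L: "subgroup (fst ` L) G"
proof -
  have "group_hom (G \<times>\<times> H) G fst"
    by (auto simp: group_hom_def group_hom_axioms_def DirProd_group G.is_group H.is_group intro: homI)
  then show ?thesis using group_hom.subgroup_img_is_subgroup subgroup_L by blast
qed

definition k :: int where
  "k = Gcd {n. a [^] n \<in> fst ` L}"

lemma a_pow_in_fst_L_iff: "a [^] (n::int) \<in> fst ` L \<longleftrightarrow> k dvd n"
  unfolding k_def by (rule G.int_pow_mem_subgroup_iff_Gcd_dvd[OF subgroup_fst_L a_carrier])

definition c :: 'h where
  "c = (SOME y. (a [^] k, y) \<in> L)"

lemma a_pow_k_c_in_L: "(a [^] k, c) \<in> L"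
  using a_pow_in_fst_L_iff[of k] unfolding c_def by (force intro: someI)

lemma L_shift: "(x, y) \<in> L \<Longrightarrow> (a [^] (k * q) \<otimes> x, c [^]\<^bsub>H\<^esub> q \<otimes>\<^bsub>H\<^esub> y) \<in> L"
  using L_mult[OF L_int_pow[OF a_pow_k_c_in_L]] by (simp add: G.int_pow_pow)

sublocale E: ext_lca H c k TH
  using a_pow_k_c_in_L L_carrier lca_H
  by unfold_locales auto

text \<open>\<open>L'\<close> is generated by \<open>L \<subseteq> G \<times> H \<subseteq> G \<times> H'\<close> and \<open>(a, b)\<close>, where \<open>b = t\<close> is the class of \<open>(\<one>, 1)\<close>.\<close>

definition L' :: "('g \<times> ('h \<times> int)) set" where
  "L' = {(a [^] n \<otimes> x, ext_norm H c k (y, n)) | x y n. (x, y) \<in> L}"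

definition b :: "'h \<times> int" where
  "b = ext_norm H c k (\<one>\<^bsub>H\<^esub>, 1)"

lemma L'I: "(x, y) \<in> L \<Longrightarrow> (a [^] (n::int) \<otimes> x, ext_norm H c k (y, n)) \<in> L'"
  unfolding L'_def by blast

lemma L'_residueI: "(x, y) \<in> L \<Longrightarrow> r \<in> int_residues k \<Longrightarrow> (a [^] r \<otimes> x, (y, r)) \<in> L'"
  using L'I[of x y r] L_carrier by (simp add: E.ext_norm_id)

lemma L'_residueE:
  assumes "p \<in> L'"
  obtains x y r where "(x, y) \<in> L" "r \<in> int_residues k" "p = (a [^] r \<otimes> x, (y, r))"
proof -
  obtain x y n where xy: "(x, y) \<in> L" and p: "p = (a [^] n \<otimes> x, ext_norm H c k (y, n))"
    using assms unfolding L'_def by blast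
  have "(a [^] (k * (n div k)) \<otimes> x, c [^]\<^bsub>H\<^esub> (n div k) \<otimes>\<^bsub>H\<^esub> y) \<in> L"
    by (rule L_shift[OF xy])
  moreover have "a [^] n \<otimes> x = a [^] (n mod k) \<otimes> (a [^] (k * (n div k)) \<otimes> x)"
    using G.int_pow_mult[OF a_carrier, of "n mod k" "k * (n div k)"] L_carrier[OF xy]
    by (simp add: G.m_assoc)
  moreover have "ext_norm H c k (y, n) = (c [^]\<^bsub>H\<^esub> (n div k) \<otimes>\<^bsub>H\<^esub> y, n mod k)"
    using L_carrier[OF xy] by (simp add: ext_norm_def H.m_comm)
  ultimately show ?thesis using that p by auto
qed

lemma L'_carrier: "L' \<subseteq> carrier (G \<times>\<times> E.H')"
  by (auto elim!: L'_residueE dest: L_carrier simp: E.carrier_ext_group)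

lemma subgroup_L': "subgroup L' (G \<times>\<times> E.H')"
proof (rule group.subgroupI[OF DirProd_group[OF G.is_group E.H'.is_group]])
  show "L' \<noteq> {}" using L'I[OF one_in_L] by blast
next
  fix p assume "p \<in> L'"
  then obtain x y n where xy: "(x, y) \<in> L" and p: "p = (a [^] n \<otimes> x, ext_norm H c k (y, n))"
    unfolding L'_def by blast
  have "inv\<^bsub>G \<times>\<times> E.H'\<^esub> p = (a [^] (- n) \<otimes> inv x, ext_norm H c k (inv\<^bsub>H\<^esub> y, - n))"
    using L_carrier[OF xy]
    by (simp add: p G.is_group E.H'.is_group E.ext_norm_carrier E.ext_norm_inv G.inv_mult G.int_pow_neg G.m_comm)
  then show "inv\<^bsub>G \<times>\<times> E.H'\<^esub> p \<in> L'"
    using L'I[OF L_inv[OF xy]] by simp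
next
  fix p q assume "p \<in> L'" "q \<in> L'"
  then obtain x y m x' y' n where xy: "(x, y) \<in> L" and p: "p = (a [^] m \<otimes> x, ext_norm H c k (y, m))"
    and xy': "(x', y') \<in> L" and q: "q = (a [^] n \<otimes> x', ext_norm H c k (y', n))"
    unfolding L'_def by blast
  have "p \<otimes>\<^bsub>G \<times>\<times> E.H'\<^esub> q = (a [^] (m + n) \<otimes> (x \<otimes> x'), ext_norm H c k (y \<otimes>\<^bsub>H\<^esub> y', m + n))"
    using L_carrier[OF xy] L_carrier[OF xy'] by (simp add: p q E.ext_norm_mult G.int_pow_mult G.m_ac)
  then show "p \<otimes>\<^bsub>G \<times>\<times> E.H'\<^esub> q \<in> L'"
    using L'I[OF L_mult[OF xy xy']] by simp
qed (rule L'_carrier)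

lemma inj_on_fst_L': "inj_on fst L'"
proof (rule inj_onI)
  fix p q assume "p \<in> L'" "q \<in> L'" and eq: "fst p = fst q"
  then obtain x y r x' y' s where xy: "(x, y) \<in> L" "r \<in> int_residues k" "p = (a [^] r \<otimes> x, (y, r))"
    and xy': "(x', y') \<in> L" "s \<in> int_residues k" "q = (a [^] s \<otimes> x', (y', s))"
    by (metis L'_residueE)
  have x: "x \<in> carrier G" "x' \<in> carrier G" using L_carrier xy(1) xy'(1) by auto
  have "x' = inv (a [^] s) \<otimes> (a [^] r \<otimes> x)"
    using eq x by (simp add: xy(3) xy'(3) G.inv_solve_left)
  also have "\<dots> = a [^] (r - s) \<otimes> x"
    using x by (simp add: G.int_pow_diff G.m_ac)
  finally have "x' \<otimes> inv x = a [^] (r - s)"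
    using x by (simp add: G.m_assoc)
  moreover have "(x' \<otimes> inv x, y' \<otimes>\<^bsub>H\<^esub> inv\<^bsub>H\<^esub> y) \<in> L"
    using L_mult[OF xy'(1) L_inv[OF xy(1)]] .
  ultimately have "k dvd r - s"
    by (metis a_pow_in_fst_L_iff fst_conv image_eqI)
  then have "r = s" using int_residues_eq xy(2) xy'(2) by blast
  then have "x = x'" using eq x by (simp add: xy(3) xy'(3))
  then have "y = y'" using inj_onD[OF inj_on_fst_L _ xy(1) xy'(1)] by simp
  then show "p = q" using \<open>r = s\<close> \<open>x = x'\<close> xy(3) xy'(3) by simp
qed

lemma dense_L': "E.T' closure_of (snd ` L') = carrier E.H'"
proof -
  have "snd ` L' = snd ` L \<times> int_residues k"
  proof (intro equalityI subsetI)
    fix z assume "z \<in> snd ` L'"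
    then show "z \<in> snd ` L \<times> int_residues k" by (force elim: L'_residueE)
  next
    fix z assume "z \<in> snd ` L \<times> int_residues k"
    then obtain x y r where "(x, y) \<in> L" "r \<in> int_residues k" "z = (y, r)" by force
    then show "z \<in> snd ` L'" using L'_residueI by force
  qed
  then show ?thesis
    by (simp add: ext_topology_def closure_of_Times dense_L discrete_topology_closure_of E.carrier_ext_group)
qed

lemma discrete_L':
  assumes "p \<in> L'"
  shows "\<exists>U. openin (prod_topology TG E.T') U \<and> U \<inter> L' = {p}"
proof -
  obtain x y r where xy: "(x, y) \<in> L" and r: "r \<in> int_residues k" and p: "p = (a [^] r \<otimes> x, (y, r))"
    using assms by (rule L'_residueE)
  obtain U where U: "openin (prod_topology TG TH) U" and UL: "U \<inter> L = {(x, y)}"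
    using lattice_L xy by (auto simp: is_lattice_def)
  define \<psi> where "\<psi> = (\<lambda>z :: 'g \<times> 'h \<times> int. (inv (a [^] r) \<otimes> fst z, fst (snd z)))"
  have "continuous_map (prod_topology TG E.T') (prod_topology TG TH) \<psi>"
    unfolding \<psi>_def ext_topology_def
    by (intro continuous_map_pairedI lca_group_continuous_map_mult[OF lca_G] continuous_map_fst
        lca_group_continuous_map_const[OF lca_G] continuous_map_fst_of[OF continuous_map_snd, unfolded comp_def])
       simp
  moreover have "openin TG (carrier G)"
    using openin_topspace[of TG] lca_group_topspace[OF lca_G] by simp
  ultimately have "openin (prod_topology TG E.T') ({z \<in> topspace (prod_topology TG E.T'). \<psi> z \<in> U} \<inter> carrier G \<times> carrier H \<times> {r})"
    using U r by (intro openin_Int openin_continuous_map_preimage) (auto simp: openin_prod_Times_iff E.openin_ext_slice)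
  moreover have "{z \<in> topspace (prod_topology TG E.T'). \<psi> z \<in> U} \<inter> carrier G \<times> carrier H \<times> {r} \<inter> L' = {p}"
  proof (intro equalityI subsetI)
    fix z assume z: "z \<in> {z \<in> topspace (prod_topology TG E.T'). \<psi> z \<in> U} \<inter> carrier G \<times> carrier H \<times> {r} \<inter> L'"
    then obtain x' y' where xy': "(x', y') \<in> L" and zr: "z = (a [^] r \<otimes> x', (y', r))"
      by (auto elim: L'_residueE)
    then have "(x', y') \<in> U \<inter> L"
      using z L_carrier[OF xy'] by (simp add: \<psi>_def G.m_assoc[symmetric])
    then show "z \<in> {p}" using UL p zr by simp
  next
    fix z assume "z \<in> {p}"
    then show "z \<in> {z \<in> topspace (prod_topology TG E.T'). \<psi> z \<in> U} \<inter> carrier G \<times> carrier H \<times> {r} \<inter> L'"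
      using UL L_carrier[OF xy] r assms lca_group_topspace[OF lca_G]
      by (auto simp: p \<psi>_def G.m_assoc[symmetric] ext_topology_def)
  qed
  ultimately show ?thesis by blast
qed

text \<open>The quotient \<open>(G \<times> H')/L'\<close> is a continuous image of the compact \<open>(G \<times> H)/L\<close>: every coset of
  \<open>L'\<close> meets \<open>G \<times> H \<times> {0}\<close>.\<close>

lemma cocompact_L':
  "\<exists>Q :: ('g \<times> 'h \<times> int) set topology.
     quotient_map (prod_topology TG E.T') Q (\<lambda>z. L' #>\<^bsub>G \<times>\<times> E.H'\<^esub> z) \<and> compact_space Q"
proof -
  obtain Q :: "('g \<times> 'h) set topology"
    where Q: "quotient_map (prod_topology TG TH) Q (\<lambda>z. L #>\<^bsub>G \<times>\<times> H\<^esub> z)" "compact_space Q"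
    using lattice_L by (auto simp: is_lattice_def)
  define e where "e = (\<lambda>z :: 'g \<times> 'h. (fst z, (snd z, 0 :: int)))"
  define f' where "f' = (\<lambda>z. L' #>\<^bsub>G \<times>\<times> E.H'\<^esub> z)"
  have group_GH': "group (G \<times>\<times> E.H')"
    by (simp add: DirProd_group G.is_group E.H'.is_group)
  have hom: "group_hom (G \<times>\<times> H) (G \<times>\<times> E.H') e"
    unfolding group_hom_def group_hom_axioms_def
    by (auto intro!: homI DirProd_group G.is_group H.is_group group_GH'
        simp: e_def E.carrier_ext_group E.mult_ext_group E.ext_norm_id)
  have eL: "e ` L \<subseteq> L'"
    using L'_residueI[OF _ zero_in_int_residues] L_carrier by (force simp: e_def)
  have topspace_GH: "topspace (prod_topology TG TH) = carrier (G \<times>\<times> H)"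
    using lca_group_topspace[OF lca_G] lca_group_topspace[OF lca_H] by simp
  have "continuous_map (prod_topology TG TH) (prod_topology TG E.T') e"
    unfolding e_def ext_topology_def by (auto intro!: continuous_map_pairedI continuous_map_fst continuous_map_snd)
  moreover have "f' (e u) = f' (e v)"
    if "u \<in> topspace (prod_topology TG TH)" "v \<in> topspace (prod_topology TG TH)"
      and "L #>\<^bsub>G \<times>\<times> H\<^esub> u = L #>\<^bsub>G \<times>\<times> H\<^esub> v" for u v
    using hom_rcos_eq[OF hom subgroup_L subgroup_L' eL] that unfolding topspace_GH f'_def by blast
  moreover have "topspace (quotient_topology (prod_topology TG E.T') f') \<subseteq> f' ` e ` topspace (prod_topology TG TH)"
  proof
    fix q assume "q \<in> topspace (quotient_topology (prod_topology TG E.T') f')"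
    then obtain g h r where w: "(g, (h, r)) \<in> carrier (G \<times>\<times> E.H')" and q: "q = f' (g, (h, r))"
      using lca_group_topspace[OF lca_G] E.topspace_ext_topology
      by (auto simp: topspace_quotient_topology ext_topology_def E.carrier_ext_group)
    define l where "l = (a [^] (- r) \<otimes> \<one>, ext_norm H c k (\<one>\<^bsub>H\<^esub>, - r))"
    have l: "l \<in> L'" unfolding l_def by (rule L'I[OF one_in_L])
    have "l \<otimes>\<^bsub>G \<times>\<times> E.H'\<^esub> (g, (h, r)) = e (a [^] (- r) \<otimes> g, h)"
      using w E.ext_norm_mult[of "\<one>\<^bsub>H\<^esub>" h "- r" r]
      by (simp add: l_def e_def E.carrier_ext_group E.ext_norm_id)
    moreover have "f' (l \<otimes>\<^bsub>G \<times>\<times> E.H'\<^esub> (g, (h, r))) = (L' #>\<^bsub>G \<times>\<times> E.H'\<^esub> l) #>\<^bsub>G \<times>\<times> E.H'\<^esub> (g, (h, r))"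
      unfolding f'_def
      by (rule group.coset_mult_assoc[OF group_GH' subgroup.subset[OF subgroup_L'] subgroup.mem_carrier[OF subgroup_L' l] w, symmetric])
    ultimately have "q = f' (e (a [^] (- r) \<otimes> g, h))"
      using subgroup.rcos_const[OF subgroup_L' group_GH' l] by (simp add: f'_def q)
    moreover have "(a [^] (- r) \<otimes> g, h) \<in> topspace (prod_topology TG TH)"
      using w lca_group_topspace[OF lca_G] lca_group_topspace[OF lca_H] by (simp add: E.carrier_ext_group)
    ultimately show "q \<in> f' ` e ` topspace (prod_topology TG TH)"
      by blast
  qed
  ultimately have "compact_space (quotient_topology (prod_topology TG E.T') f')"
    by (intro compact_space_quotient_map_factor[OF Q(1) Q(2) quotient_map_quotient_topology])
  then show ?thesis
    using quotient_map_quotient_topology unfolding f'_def by blast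
qed

lemma cut_and_project_L': "cut_and_project G TG E.H' E.T' L'"
  unfolding cut_and_project_def is_lattice_def
  using lca_G E.lca_group_ext subgroup_L' discrete_L' cocompact_L' inj_on_fst_L' dense_L' by blast

lemma b_carrier: "b \<in> carrier E.H'"
  by (simp add: b_def E.ext_norm_carrier)

lemma a_b_in_L': "(a, b) \<in> L'"
  using L'I[OF one_in_L, of 1] by (simp add: b_def)

lemma L'_Int_slice: "{p \<in> L'. snd p \<in> W \<times> {0}} = (\<lambda>(x, y). (x, (y, 0))) ` {p \<in> L. snd p \<in> W}"
proof (intro equalityI subsetI)
  fix p assume p: "p \<in> {p \<in> L'. snd p \<in> W \<times> {0}}"
  then obtain x y r where xy: "(x, y) \<in> L" and pr: "p = (a [^] r \<otimes> x, (y, r))"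
    by (auto elim: L'_residueE)
  then have "p = (x, (y, 0))" and "y \<in> W"
    using p L_carrier[OF xy] by auto
  then show "p \<in> (\<lambda>(x, y). (x, (y, 0::int))) ` {p \<in> L. snd p \<in> W}"
    using xy by (intro image_eqI[where x = "(x, y)"]) simp_all
next
  fix p assume "p \<in> (\<lambda>(x, y). (x, (y, 0::int))) ` {p \<in> L. snd p \<in> W}"
  then obtain x y where xy: "(x, y) \<in> L" and "y \<in> W" and "p = (x, (y, 0))"
    by auto
  moreover have "(x, (y, 0)) \<in> L'"
    using L'_residueI[OF xy zero_in_int_residues] L_carrier[OF xy] by simp
  ultimately show "p \<in> {p \<in> L'. snd p \<in> W \<times> {0}}"
    by simp
qed

lemma proj_set_L'_slice: "proj_set L' (W \<times> {0}) = proj_set L W"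
  unfolding proj_set_def L'_Int_slice by (simp add: image_image case_prod_unfold)

lemma proj_set_L'_translate:
  assumes W: "W \<subseteq> carrier H"
  shows "proj_set L' ((\<lambda>y. b \<otimes>\<^bsub>E.H'\<^esub> y) ` (W \<times> {0})) = (\<lambda>x. a \<otimes> x) ` proj_set L W"
proof -
  have "b \<otimes>\<^bsub>E.H'\<^esub> (w, 0) = ext_norm H c k (w, 1)" if "w \<in> W" for w
    using E.ext_norm_mult[of "\<one>\<^bsub>H\<^esub>" w 1 0] that W by (auto simp: b_def E.ext_norm_id)
  moreover have "W \<times> {0::int} = (\<lambda>w. (w, 0)) ` W" by auto
  ultimately have translate: "(\<lambda>y. b \<otimes>\<^bsub>E.H'\<^esub> y) ` (W \<times> {0}) = (\<lambda>w. ext_norm H c k (w, 1)) ` W"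
    by (simp add: image_image cong: image_cong)
  have L'_iff: "(g, ext_norm H c k (w, 1)) \<in> L' \<longleftrightarrow> (\<exists>x. g = a \<otimes> x \<and> (x, w) \<in> L)"
    if w: "w \<in> carrier H" for g w
  proof
    assume "(g, ext_norm H c k (w, 1)) \<in> L'"
    then obtain x y n where xy: "(x, y) \<in> L" and g: "g = a [^] n \<otimes> x"
      and eq: "ext_norm H c k (y, n) = ext_norm H c k (w, 1)"
      unfolding L'_def by auto
    define q where "q = n div k - 1 div k"
    have n: "n = 1 + k * q" and wq: "w = y \<otimes>\<^bsub>H\<^esub> c [^]\<^bsub>H\<^esub> q"
      using E.ext_norm_eqD[OF _ w eq] L_carrier[OF xy] unfolding q_def by blast+
    have "(a [^] (k * q) \<otimes> x, w) \<in> L"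
      using L_shift[OF xy, of q] L_carrier[OF xy] by (simp add: wq H.m_comm)
    moreover have "g = a \<otimes> (a [^] (k * q) \<otimes> x)"
      using L_carrier[OF xy] G.int_pow_mult[OF a_carrier, of 1 "k * q"] by (simp add: g n G.m_assoc)
    ultimately show "\<exists>x. g = a \<otimes> x \<and> (x, w) \<in> L" by blast
  next
    assume "\<exists>x. g = a \<otimes> x \<and> (x, w) \<in> L"
    then show "(g, ext_norm H c k (w, 1)) \<in> L'"
      using L'I[of _ w 1] by auto
  qed
  show ?thesis
  proof (intro equalityI subsetI)
    fix g assume "g \<in> proj_set L' ((\<lambda>y. b \<otimes>\<^bsub>E.H'\<^esub> y) ` (W \<times> {0}))"
    then obtain w where w: "w \<in> W" and "(g, ext_norm H c k (w, 1)) \<in> L'"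
      unfolding proj_set_def translate by (auto simp: image_iff)
    then obtain x where "g = a \<otimes> x" and "(x, w) \<in> L"
      using L'_iff W by blast
    then show "g \<in> (\<lambda>x. a \<otimes> x) ` proj_set L W"
      unfolding proj_set_def using w by (intro image_eqI[where x = x] image_eqI[where x = "(x, w)"]) simp_all
  next
    fix g assume "g \<in> (\<lambda>x. a \<otimes> x) ` proj_set L W"
    then obtain x w where "g = a \<otimes> x" "(x, w) \<in> L" "w \<in> W"
      unfolding proj_set_def by auto
    then have "(g, ext_norm H c k (w, 1)) \<in> L'" and "w \<in> W"
      using L'_iff[of w g] W by auto
    then show "g \<in> proj_set L' ((\<lambda>y. b \<otimes>\<^bsub>E.H'\<^esub> y) ` (W \<times> {0}))"
      unfolding proj_set_def translate by (intro image_eqI[where x = "(g, ext_norm H c k (w, 1))"]) auto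
  qed
qed

lemma L_Int_carrier: "{p \<in> L. snd p \<in> carrier H} = L"
  using L_carrier by auto

lemma regularity_slice_and_translate:
  assumes W: "W \<subseteq> carrier H"
  shows "(precompact_in TH W \<longrightarrow>
           precompact_in E.T' (W \<times> {0}) \<and> precompact_in E.T' ((\<lambda>y. b \<otimes>\<^bsub>E.H'\<^esub> y) ` (W \<times> {0}))) \<and>
        (nonempty_interior TH W \<longrightarrow>
           nonempty_interior E.T' (W \<times> {0}) \<and> nonempty_interior E.T' ((\<lambda>y. b \<otimes>\<^bsub>E.H'\<^esub> y) ` (W \<times> {0}))) \<and>
        (top_regular TH W \<longrightarrow>
           top_regular E.T' (W \<times> {0}) \<and> top_regular E.T' ((\<lambda>y. b \<otimes>\<^bsub>E.H'\<^esub> y) ` (W \<times> {0}))) \<and>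
        (mt_regular H TH W \<longrightarrow>
           mt_regular E.H' E.T' (W \<times> {0}) \<and> mt_regular E.H' E.T' ((\<lambda>y. b \<otimes>\<^bsub>E.H'\<^esub> y) ` (W \<times> {0})))"
proof -
  have "W \<times> {0} \<subseteq> carrier E.H'" using W by (auto simp: E.carrier_ext_group)
  note translation = precompact_in_translation[OF E.lca_group_ext b_carrier this]
    nonempty_interior_translation[OF E.lca_group_ext b_carrier this]
    top_regular_translation[OF E.lca_group_ext b_carrier this]
    mt_regular_translation[OF E.lca_group_ext b_carrier this]
  show ?thesis
    using E.precompact_in_ext_slice E.nonempty_interior_ext_slice E.top_regular_ext_slice
      E.mt_regular_ext_slice translation
    by blast
qed

end

theorem theorem2p2:
  fixes G :: "'g monoid" and TG :: "'g topology"
    and H :: "'h monoid" and TH :: "'h topology"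
    and L :: "('g \<times> 'h) set" and a :: 'g
  assumes "cut_and_project G TG H TH L" and "a \<in> carrier G"
  shows "\<exists>(H' :: ('h \<times> int) monoid) (TH' :: ('h \<times> int) topology) L' b \<iota>.
     cut_and_project G TG H' TH' L' \<and> b \<in> carrier H' \<and>
     \<comment> \<open>(a) H is identified (via \<iota>) with an open and closed subgroup of H'\<close>
     \<iota> \<in> hom H H' \<and> inj_on \<iota> (carrier H) \<and>
     subgroup (\<iota> ` carrier H) H' \<and>
     openin TH' (\<iota> ` carrier H) \<and> closedin TH' (\<iota> ` carrier H) \<and>
     homeomorphic_map TH (subtopology TH' (\<iota> ` carrier H)) \<iota> \<and>
     \<comment> \<open>(b)\<close>
     (a, b) \<in> L' \<and>
     \<comment> \<open>(c)\<close>
     {p \<in> L'. snd p \<in> \<iota> ` carrier H} = (\<lambda>(x, y). (x, \<iota> y)) ` L \<and>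
     \<comment> \<open>(d)\<close>
     (\<forall>W \<subseteq> carrier H.
        proj_set L W = proj_set L' (\<iota> ` W) \<and>
        (\<lambda>x. a \<otimes>\<^bsub>G\<^esub> x) ` proj_set L W
          = proj_set L' ((\<lambda>y. b \<otimes>\<^bsub>H'\<^esub> y) ` \<iota> ` W)) \<and>
     \<comment> \<open>(e)\<close>
     (\<forall>W \<subseteq> carrier H.
        (precompact_in TH W \<longrightarrow>
           precompact_in TH' (\<iota> ` W) \<and> precompact_in TH' ((\<lambda>y. b \<otimes>\<^bsub>H'\<^esub> y) ` \<iota> ` W)) \<and>
        (nonempty_interior TH W \<longrightarrow>
           nonempty_interior TH' (\<iota> ` W) \<and> nonempty_interior TH' ((\<lambda>y. b \<otimes>\<^bsub>H'\<^esub> y) ` \<iota> ` W)) \<and>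
        (top_regular TH W \<longrightarrow>
           top_regular TH' (\<iota> ` W) \<and> top_regular TH' ((\<lambda>y. b \<otimes>\<^bsub>H'\<^esub> y) ` \<iota> ` W)) \<and>
        (mt_regular H TH W \<longrightarrow>
           mt_regular H' TH' (\<iota> ` W) \<and> mt_regular H' TH' ((\<lambda>y. b \<otimes>\<^bsub>H'\<^esub> y) ` \<iota> ` W))) \<and>
     \<comment> \<open>(f)\<close>
     (metrizable_space TH \<longrightarrow> metrizable_space TH')"
proof -
  have "comm_group G" "comm_group H"
    using assms(1) by (simp_all add: cut_and_project_def lca_group_def)
  then interpret cut_and_project_point G H TG TH L a
    using assms by (intro cut_and_project_point.intro cut_and_project_point_axioms.intro)
  have slice: "(\<lambda>h. (h, 0::int)) ` W = W \<times> {0}" for W :: "'h set"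
    by auto
  show ?thesis
    using cut_and_project_L' b_carrier E.slice_hom E.slice_subgroup E.openin_ext_base E.closedin_ext_base
      E.homeomorphic_ext_base a_b_in_L' L'_Int_slice[of "carrier H"] proj_set_L'_slice proj_set_L'_translate
      regularity_slice_and_translate E.metrizable_ext
    by (intro exI[of _ "ext_group H c k"] exI[of _ "ext_topology TH k"] exI[of _ L'] exI[of _ b]
        exI[of _ "\<lambda>h. (h, 0)"])
       (simp add: slice inj_on_def L_Int_carrier)
qed

end
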